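(* Let $\Psi=\{|\psi_i\rangle\}$ be a family of multi-qubit states that is a universal resource under local projective measurements up to local unitary operations. Then, for any encoding $\{|\mathbf0\rangle,|\mathbf1\rangle\}$, the encoded version $\boldsymbol\Psi$ of the family is an encoded universal resource under LOCC up to logical local unitary operations.
   Context: $\Psi$ is a universal resource under local projective measurements up to local unitary operations if for every $n$ and every $n$-qubit state $|\phi\rangle$ there is $|\psi_i\rangle\in\Psi$ and a (possibly adaptive) sequence of single-qubit projective measurements on all but a fixed set of $n$ qubits of $|\psi_i\rangle$ such that in every branch the unmeasured $n$ qubits are in the state $(U_1\otimes\cdots\otimes U_n)|\phi\rangle$ for some single-qubit unitaries $U_k$ (depending on the branch). An encoding is a fixed pair of orthogonal $m$-qubit states $|\mathbf0\rangle,|\mathbf1\rangle$; the encoded version of an $N$-qubit state $\sum c_{i_1\dots i_N}|i_1\dots i_N\rangle$ is the $mN$-qubit state $\sum c_{i_1\dots i_N}|\mathbf i_1\rangle_{A_1}\cdots|\mathbf i_N\rangle_{A_N}$, where $A_k$ are disjoint blocks of $m$ qubits; $\boldsymbol\Psi$ consists of the encoded versions of the members of $\Psi$. For a one-qubit operator $U=\sum_{a,b}u_{ab}|a\rangle\langle b|$, its logical version is $\mathbf U=\sum_{a,b}u_{ab}|\mathbf a\rangle\langle\mathbf b|$ acting on a block. "Encoded universal resource under LOCC up to logical local unitary operations" means: for every $n$ and every $n$-qubit $|\phi\rangle$ there is a member of $\boldsymbol\Psi$ and an LOCC protocol (each physical qubit a separate party) which, exactly and with probability one, leaves a fixed set of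 $n$ blocks in the state $(\mathbf U_1\otimes\cdots\otimes\mathbf U_n)|\boldsymbol\phi\rangle$ for some logical single-qubit unitaries $\mathbf U_k$ (depending on the branch), $|\boldsymbol\phi\rangle$ being the encoded version of $|\phi\rangle$. *)

theory Defs
  imports Complex_Main
begin

text \<open>A single-qubit operator is a 2x2 matrix
  u :: bool => bool => complex with u a b = <a|U|b>.\<close>

type_synonym cfg = "nat \<Rightarrow> bool"
type_synonym qstate = "cfg \<Rightarrow> complex"
type_synonym op1 = "bool \<Rightarrow> bool \<Rightarrow> complex"

definition cfgs :: "nat set \<Rightarrow> cfg set" where
  "cfgs S = {x. \<forall>j. x j \<longrightarrow> j \<in> S}"

definition is_state :: "nat set \<Rightarrow> qstate \<Rightarrow> bool" where
  "is_state S \<psi> \<longleftrightarrow> (\<forall>x. x \<notin> cfgs S \<longrightarrow> \<psi> x = 0)"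

definition qinner :: "nat set \<Rightarrow> qstate \<Rightarrow> qstate \<Rightarrow> complex" where
  "qinner S \<phi> \<psi> = (\<Sum>x\<in>cfgs S. cnj (\<phi> x) * \<psi> x)"

definition normalized_state :: "nat set \<Rightarrow> qstate \<Rightarrow> bool" where
  "normalized_state S \<psi> \<longleftrightarrow> is_state S \<psi> \<and> qinner S \<psi> \<psi> = 1"

definition unitary2 :: "op1 \<Rightarrow> bool" where
  "unitary2 u \<longleftrightarrow> (\<forall>a c. (\<Sum>b\<in>UNIV. cnj (u b a) * u b c) = (if a = c then 1 else 0))"

text \<open>Apply an operator A (matrix indexed by configurations supported on S) to the qubits S.\<close>
definition apply_on :: "nat set \<Rightarrow> (cfg \<Rightarrow> cfg \<Rightarrow> complex) \<Rightarrow> qstate \<Rightarrow> qstate" where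
  "apply_on S A \<psi> = (\<lambda>x. \<Sum>z\<in>cfgs S. A (\<lambda>j. j \<in> S \<and> x j) z * \<psi> (\<lambda>j. if j \<in> S then z j else x j))"

definition apply1 :: "nat \<Rightarrow> op1 \<Rightarrow> qstate \<Rightarrow> qstate" where
  "apply1 j M = apply_on {j} (\<lambda>x z. M (x j) (z j))"

fun apply_locals :: "nat \<Rightarrow> (nat \<Rightarrow> op1) \<Rightarrow> qstate \<Rightarrow> qstate" where
  "apply_locals 0 U \<phi> = \<phi>"
| "apply_locals (Suc k) U \<phi> = apply1 k (U k) (apply_locals k U \<phi>)"

text \<open>Relabel a state on qubits S via the injection pi: qubit j becomes qubit pi j.\<close>
definition relabel :: "(nat \<Rightarrow> nat) \<Rightarrow> nat set \<Rightarrow> qstate \<Rightarrow> qstate" where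
  "relabel \<pi> S \<chi> = (\<lambda>y. if y \<in> cfgs (\<pi> ` S) then \<chi> (\<lambda>j. j \<in> S \<and> y (\<pi> j)) else 0)"

text \<open>The qubits in S are (exactly) in the pure state chi, i.e. the global (unnormalised)
  vector psi is a product of chi on S with some vector on the remaining qubits
  (the scalar/zero case covers branches of probability zero).\<close>
definition in_state :: "nat set \<Rightarrow> qstate \<Rightarrow> qstate \<Rightarrow> bool" where
  "in_state S \<chi> \<psi> \<longleftrightarrow>
     (\<exists>r. \<forall>x. \<psi> x = \<chi> (\<lambda>j. j \<in> S \<and> x j) * r (\<lambda>j. j \<notin> S \<and> x j))"

text \<open>Meas j V f: measure qubit j in the orthonormal basis given by the columns of the
  unitary V (|v_b> has amplitudes V a b); on outcome b continue with f b.\<close>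
datatype mtree = MLeaf | Meas nat op1 "bool \<Rightarrow> mtree"

definition proj_col :: "op1 \<Rightarrow> bool \<Rightarrow> op1" where
  "proj_col V b = (\<lambda>a c. V a b * cnj (V c b))"

primrec mleaves :: "mtree \<Rightarrow> qstate \<Rightarrow> qstate set" where
  "mleaves MLeaf = (\<lambda>\<psi>. {\<psi>})"
| "mleaves (Meas j V f) = (\<lambda>\<psi>. \<Union>b\<in>UNIV. mleaves (f b) (apply1 j (proj_col V b) \<psi>))"

text \<open>valid_mt R M T: T measures only qubits in R, with genuine rank-one single-qubit
  projective measurements, and along every branch every qubit of R gets measured
  (M = qubits measured so far).\<close>
primrec valid_mt_aux :: "mtree \<Rightarrow> nat set \<Rightarrow> nat set \<Rightarrow> bool" where
  "valid_mt_aux MLeaf = (\<lambda>R M. R \<subseteq> M)"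
| "valid_mt_aux (Meas j V f) = (\<lambda>R M. j \<in> R \<and> unitary2 V \<and> (\<forall>b. valid_mt_aux (f b) R (insert j M)))"

definition valid_mt :: "nat set \<Rightarrow> nat set \<Rightarrow> mtree \<Rightarrow> bool" where
  "valid_mt R M T = valid_mt_aux T R M"

text \<open>A family is a set of pairs (N, psi) with psi an N-qubit state on qubits 0..N-1.\<close>
definition universal_LPM :: "(nat \<times> qstate) set \<Rightarrow> bool" where
  "universal_LPM \<Psi> \<longleftrightarrow>
    (\<forall>n \<phi>. normalized_state {..<n} \<phi> \<longrightarrow>
      (\<exists>(N, \<psi>)\<in>\<Psi>. \<exists>pos T.
          inj_on pos {..<n} \<and> pos ` {..<n} \<subseteq> {..<N} \<and>
          valid_mt ({..<N} - pos ` {..<n}) {} T \<and>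
          (\<forall>\<chi>\<in>mleaves T \<psi>. \<exists>U. (\<forall>k<n. unitary2 (U k)) \<and>
              in_state (pos ` {..<n}) (relabel pos {..<n} (apply_locals n U \<phi>)) \<chi>)))"

definition is_encoding :: "nat \<Rightarrow> (bool \<Rightarrow> qstate) \<Rightarrow> bool" where
  "is_encoding m e \<longleftrightarrow> normalized_state {..<m} (e False) \<and> normalized_state {..<m} (e True)
      \<and> qinner {..<m} (e False) (e True) = 0"

definition blockset :: "nat \<Rightarrow> nat \<Rightarrow> nat set" where
  "blockset m k = {k*m ..< k*m + m}"

definition block :: "nat \<Rightarrow> nat \<Rightarrow> cfg \<Rightarrow> cfg" where
  "block m k y = (\<lambda>j. j < m \<and> y (k*m + j))"

definition encode :: "(bool \<Rightarrow> qstate) \<Rightarrow> nat \<Rightarrow> nat \<Rightarrow> qstate \<Rightarrow> qstate" where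
  "encode e m N \<psi> = (\<lambda>y. if y \<in> cfgs {..<N*m}
      then (\<Sum>i\<in>cfgs {..<N}. \<psi> i * (\<Prod>k<N. e (i k) (block m k y))) else 0)"

definition encoded_family :: "(bool \<Rightarrow> qstate) \<Rightarrow> nat \<Rightarrow> (nat \<times> qstate) set \<Rightarrow> (nat \<times> qstate) set" where
  "encoded_family e m \<Psi> = (\<lambda>(N, \<psi>). (N, encode e m N \<psi>)) ` \<Psi>"

definition logical_op :: "(bool \<Rightarrow> qstate) \<Rightarrow> nat \<Rightarrow> nat \<Rightarrow> op1 \<Rightarrow> cfg \<Rightarrow> cfg \<Rightarrow> complex" where
  "logical_op e m k u = (\<lambda>x z. \<Sum>a\<in>UNIV. \<Sum>b\<in>UNIV.
       u a b * e a (block m k x) * cnj (e b (block m k z)))"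

fun apply_logicals :: "(bool \<Rightarrow> qstate) \<Rightarrow> nat \<Rightarrow> nat \<Rightarrow> (nat \<Rightarrow> op1) \<Rightarrow> qstate \<Rightarrow> qstate" where
  "apply_logicals e m 0 U \<phi> = \<phi>"
| "apply_logicals e m (Suc k) U \<phi> =
     apply_on (blockset m k) (logical_op e m k (U k)) (apply_logicals e m k U \<phi>)"

definition blockmap :: "nat \<Rightarrow> (nat \<Rightarrow> nat) \<Rightarrow> nat \<Rightarrow> nat" where
  "blockmap m pos j = pos (j div m) * m + j mod m"

text \<open>Act j Ks f: party j (a single qubit) applies the local quantum instrument with
  (fine-grained) Kraus operators Ks; on outcome i the outcome is broadcast and the
  protocol continues with f i.  Finitely many rounds, arbitrary adaptivity.\<close>
datatype locc = Done | Act nat "op1 list" "nat \<Rightarrow> locc"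

definition kraus_complete :: "op1 list \<Rightarrow> bool" where
  "kraus_complete Ks \<longleftrightarrow>
     (\<forall>a c. (\<Sum>K\<leftarrow>Ks. \<Sum>b\<in>UNIV. cnj (K b a) * K b c) = (if a = c then 1 else 0))"

primrec valid_locc_aux :: "locc \<Rightarrow> nat set \<Rightarrow> bool" where
  "valid_locc_aux Done = (\<lambda>Q. True)"
| "valid_locc_aux (Act j Ks f) = (\<lambda>Q.
     j \<in> Q \<and> kraus_complete Ks \<and> (\<forall>i<length Ks. valid_locc_aux (f i) Q))"

definition valid_locc :: "nat set \<Rightarrow> locc \<Rightarrow> bool" where
  "valid_locc Q P = valid_locc_aux P Q"

primrec lleaves :: "locc \<Rightarrow> qstate \<Rightarrow> qstate set" where
  "lleaves Done = (\<lambda>\<psi>. {\<psi>})"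
| "lleaves (Act j Ks f) = (\<lambda>\<psi>. \<Union>i<length Ks. lleaves (f i) (apply1 j (Ks ! i) \<psi>))"

definition encoded_universal_LOCC ::
  "(bool \<Rightarrow> qstate) \<Rightarrow> nat \<Rightarrow> (nat \<times> qstate) set \<Rightarrow> bool" where
  "encoded_universal_LOCC e m \<Psi>enc \<longleftrightarrow>
    (\<forall>n \<phi>. normalized_state {..<n} \<phi> \<longrightarrow>
      (\<exists>(N, \<psi>)\<in>\<Psi>enc. \<exists>pos P.
          inj_on pos {..<n} \<and> pos ` {..<n} \<subseteq> {..<N} \<and>
          valid_locc {..<N*m} P \<and>
          (\<forall>\<chi>\<in>lleaves P \<psi>. \<exists>U. (\<forall>k<n. unitary2 (U k)) \<and>
              in_state (\<Union>k\<in>pos ` {..<n}. blockset m k)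
                (relabel (blockmap m pos) {..<n*m} (apply_logicals e m n U (encode e m n \<phi>))) \<chi>)))"

end

(* The adaptive single-qubit measurements on the unencoded resource are simulated by an LOCC
   protocol on its encoding.  Encoding intertwines an operator X on qubit j with the logical
   operator X on block j, so measuring qubit j in an orthonormal basis {v0, v1} splits the encoded
   state into two summands in which block j is in the orthogonal logical states v0 and v1.  Two
   orthogonal states of a block can be told apart by LOCC (Walgate et al.): measure one physical
   qubit in a basis that keeps the two conditional states orthogonal -- it exists because a
   traceless 2x2 form has an isotropic unit vector -- and recurse.  Having learnt the outcome, the
   protocol continues with the corresponding subtree; what it did to blocks of measured qubits does
   not matter, since they are disjoint from the target blocks.  At the leaves the encoded state
   factorises into the encoded target, relabelled onto the target blocks, and a state of the other
   blocks, and encoding turns the local unitaries into logical ones. *)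

theory Submission
  imports Defs
begin

section \<open>Configurations and operators on qubits\<close>

lemma sum_UNIV_bool: "(\<Sum>a\<in>UNIV. f a) = f False + (f True :: 'a::comm_monoid_add)"
  by (simp add: UNIV_bool add.commute)

lemma cfgs_empty: "cfgs {} = {\<lambda>_. False}"
  unfolding cfgs_def by auto

lemma sum_cfgs_insert:
  assumes "q \<notin> B"
  shows "sum F (cfgs (insert q B)) = (\<Sum>y\<in>cfgs B. \<Sum>a\<in>UNIV. F (y(q := a)))"
proof -
  have "bij_betw (\<lambda>(y, a). y(q := a)) (cfgs B \<times> UNIV) (cfgs (insert q B))"
    by (rule bij_betw_byWitness[where f' = "\<lambda>x. (x(q := False), x q)"])
      (use assms in \<open>auto simp: cfgs_def fun_eq_iff split: if_splits\<close>)
  then have "sum F (cfgs (insert q B)) = (\<Sum>(y, a)\<in>cfgs B \<times> UNIV. F (y(q := a)))"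
    by (simp add: sum.reindex_bij_betw[symmetric] case_prod_beta')
  then show ?thesis
    by (simp add: sum.cartesian_product)
qed

lemma sum_cfgs_union:
  assumes "A \<inter> B = {}"
  shows "sum F (cfgs (A \<union> B)) = (\<Sum>a\<in>cfgs A. \<Sum>b\<in>cfgs B. F (\<lambda>j. a j \<or> b j))"
proof -
  have "bij_betw (\<lambda>(a, b) j. a j \<or> b j) (cfgs A \<times> cfgs B) (cfgs (A \<union> B))"
    by (rule bij_betw_byWitness[where f' = "\<lambda>x. (\<lambda>j. j \<in> A \<and> x j, \<lambda>j. j \<in> B \<and> x j)"])
      (use assms in \<open>auto simp: cfgs_def fun_eq_iff\<close>)
  then have "sum F (cfgs (A \<union> B)) = (\<Sum>(a, b)\<in>cfgs A \<times> cfgs B. F (\<lambda>j. a j \<or> b j))"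
    by (simp add: sum.reindex_bij_betw[symmetric] case_prod_beta')
  then show ?thesis
    by (simp add: sum.cartesian_product)
qed

lemma apply1_eq_sum: "apply1 j K \<phi> x = (\<Sum>a\<in>UNIV. K (x j) a * \<phi> (x(j := a)))"
  unfolding apply1_def apply_on_def
  by (simp add: sum_cfgs_insert[of j "{}", simplified] cfgs_empty fun_upd_def)

lemma apply_on_add:
  "apply_on J A (\<lambda>x. \<phi> x + \<psi> x) = (\<lambda>x. apply_on J A \<phi> x + apply_on J A \<psi> x)"
  unfolding apply_on_def by (simp add: distrib_left sum.distrib)

lemma apply_on_scale: "apply_on J (\<lambda>x z. c * A x z) \<phi> = (\<lambda>x. c * apply_on J A \<phi> x)"
  unfolding apply_on_def by (simp add: sum_distrib_left mult.assoc)

lemma is_state_apply_on: "is_state S \<phi> \<Longrightarrow> J \<subseteq> S \<Longrightarrow> is_state S (apply_on J A \<phi>)"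
  unfolding is_state_def apply_on_def cfgs_def by (auto intro!: sum.neutral) (metis subsetD)

lemma apply1_add: "apply1 j K (\<lambda>x. \<phi> x + \<psi> x) = (\<lambda>x. apply1 j K \<phi> x + apply1 j K \<psi> x)"
  unfolding apply1_def by (rule apply_on_add)

lemma apply1_op_add:
  "apply1 j (\<lambda>a c. A a c + B a c) \<phi> = (\<lambda>x. apply1 j A \<phi> x + apply1 j B \<phi> x)"
  by (rule ext) (simp add: apply1_eq_sum sum_UNIV_bool algebra_simps)

lemma apply1_op_scale: "apply1 j (\<lambda>a c. k * A a c) \<phi> = (\<lambda>x. k * apply1 j A \<phi> x)"
  by (rule ext) (simp add: apply1_eq_sum sum_UNIV_bool algebra_simps)

lemma apply1_id: "apply1 j (\<lambda>a c. if a = c then 1 else 0) \<phi> = \<phi>"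
proof (rule ext)
  show "apply1 j (\<lambda>a c. if a = c then 1 else 0) \<phi> x = \<phi> x" for x
    by (cases "x j") (simp_all add: apply1_eq_sum sum_UNIV_bool fun_upd_idem)
qed

lemma apply1_commute: "i \<noteq> j \<Longrightarrow> apply1 i A (apply1 j B \<phi>) = apply1 j B (apply1 i A \<phi>)"
  by (rule ext) (simp add: apply1_eq_sum sum_UNIV_bool algebra_simps fun_upd_twist)

lemma sum_cfgs_apply1_transpose:
  assumes "j \<in> I"
  shows "(\<Sum>i\<in>cfgs I. apply1 j X \<psi> i * g i) = (\<Sum>i\<in>cfgs I. \<psi> i * (\<Sum>a\<in>UNIV. X a (i j) * g (i(j := a))))"
proof -
  have split: "sum F (cfgs I) = (\<Sum>y\<in>cfgs (I - {j}). \<Sum>a\<in>UNIV. F (y(j := a)))" for F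
    using sum_cfgs_insert[of j "I - {j}" F] assms by (simp add: insert_absorb)
  show ?thesis
    unfolding split by (simp add: apply1_eq_sum sum_UNIV_bool algebra_simps)
qed

definition opmul :: "op1 \<Rightarrow> op1 \<Rightarrow> op1" where
  "opmul A B = (\<lambda>a c. \<Sum>b\<in>UNIV. A a b * B b c)"

lemma apply1_opmul: "apply1 j A (apply1 j B \<phi>) = apply1 j (opmul A B) \<phi>"
  by (rule ext) (simp add: apply1_eq_sum opmul_def sum_UNIV_bool algebra_simps)

section \<open>Linear algebra of a single qubit\<close>

definition inner2 :: "(bool \<Rightarrow> complex) \<Rightarrow> (bool \<Rightarrow> complex) \<Rightarrow> complex" where
  "inner2 u v = (\<Sum>a\<in>UNIV. cnj (u a) * v a)"

definition outer :: "(bool \<Rightarrow> complex) \<Rightarrow> (bool \<Rightarrow> complex) \<Rightarrow> op1" where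
  "outer u v = (\<lambda>a c. u a * cnj (v c))"

definition column :: "op1 \<Rightarrow> bool \<Rightarrow> bool \<Rightarrow> complex" where
  "column V b = (\<lambda>a. V a b)"

lemma opmul_outer: "opmul (outer u v) (outer v' w) = (\<lambda>a c. inner2 v v' * outer u w a c)"
  unfolding opmul_def outer_def inner2_def
  by (simp add: fun_eq_iff sum_UNIV_bool algebra_simps)

lemma proj_col_eq_outer: "proj_col V b = outer (column V b) (column V b)"
  unfolding proj_col_def outer_def column_def ..

lemma unitary2_iff_inner2: "unitary2 V \<longleftrightarrow> (\<forall>a c. inner2 (column V a) (column V c) = (if a = c then 1 else 0))"
  unfolding unitary2_def inner2_def column_def ..

lemma unitary2_rows:
  assumes "unitary2 V"
  shows "(\<Sum>b\<in>UNIV. V a b * cnj (V c b)) = (if a = c then 1 else 0)"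
proof -
  define p q r s where entries:
    "p = V False False" "q = V False True" "r = V True False" "s = V True True"
  have col: "cnj p * p + cnj r * r = 1" "cnj q * q + cnj s * s = 1" "cnj p * q + cnj r * s = 0"
    using assms unfolding unitary2_def entries
    by (auto simp: sum_UNIV_bool dest: spec[of _ False] spec[of _ True])
  define d where "d = p * s - q * r"
  \<comment> \<open>the second column is d times the column orthogonal to the first, with |d| = 1\<close>
  have q: "q = - cnj r * d" and s: "s = cnj p * d"
    unfolding d_def using col(1,3) by algebra+
  have "cnj q * q + cnj s * s = d * cnj d * (cnj p * p + cnj r * r)"
    unfolding q s by (simp add: algebra_simps)
  then have d: "d * cnj d = 1"
    using col(1,2) by simp
  have "q * cnj q = r * cnj r * (d * cnj d)" "s * cnj s = p * cnj p * (d * cnj d)"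
    "q * cnj s = - p * cnj r * (d * cnj d)"
    unfolding q s by (simp_all add: algebra_simps)
  then have rows: "p * cnj p + q * cnj q = 1" "r * cnj r + s * cnj s = 1" "p * cnj r + q * cnj s = 0"
    using col(1) d by (simp_all add: algebra_simps)
  moreover have "r * cnj p + s * cnj q = 0"
    using arg_cong[OF rows(3), of cnj] by (simp add: mult.commute)
  ultimately show ?thesis
    unfolding entries by (cases a; cases c) (simp_all add: sum_UNIV_bool)
qed

lemma unitary2_column_unit: "unitary2 V \<Longrightarrow> inner2 (column V b) (column V b) = 1"
  unfolding unitary2_iff_inner2 by simp

lemma apply1_proj_col_sum:
  assumes "unitary2 V"
  shows "(\<lambda>x. apply1 j (proj_col V False) \<psi> x + apply1 j (proj_col V True) \<psi> x) = \<psi>"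
proof -
  have "(\<lambda>a c. proj_col V False a c + proj_col V True a c) = (\<lambda>a c. if a = c then 1 else 0)"
    using unitary2_rows[OF assms] unfolding proj_col_def by (auto simp: fun_eq_iff sum_UNIV_bool)
  then show ?thesis
    using apply1_op_add[of j "proj_col V False" "proj_col V True" \<psi>] by (simp add: apply1_id)
qed

lemma unitary2_column_overlap:
  assumes "unitary2 V" "inner2 w w = 1"
  obtains b where "inner2 (column V b) w \<noteq> 0"
proof -
  have "w a = (\<Sum>b\<in>UNIV. V a b * inner2 (column V b) w)" for a
  proof -
    have "w a = (\<Sum>c\<in>UNIV. (\<Sum>b\<in>UNIV. V a b * cnj (V c b)) * w c)"
      by (simp add: unitary2_rows[OF assms(1)] sum_UNIV_bool)
    then show ?thesis
      by (simp add: inner2_def column_def sum_UNIV_bool algebra_simps)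
  qed
  moreover have "w \<noteq> (\<lambda>_. 0)"
    using assms(2) by (auto simp: inner2_def)
  ultimately show ?thesis
    using that by force
qed

lemma complex_real_dependent3:
  fixes a1 a2 a3 :: complex
  obtains x1 x2 x3 :: real where "x1 \<noteq> 0 \<or> x2 \<noteq> 0 \<or> x3 \<noteq> 0"
    and "of_real x1 * a1 + of_real x2 * a2 + of_real x3 * a3 = 0"
proof -
  \<comment> \<open>the cross product of the real and imaginary parts is a dependency unless they are parallel\<close>
  define n1 n2 n3 where "n1 = Im (cnj a2 * a3)" "n2 = Im (cnj a3 * a1)" "n3 = Im (cnj a1 * a2)"
  have cross: "of_real n1 * a1 + of_real n2 * a2 + of_real n3 * a3 = 0"
    unfolding n1_n2_n3_def by (simp add: complex_eq_iff algebra_simps)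
  consider "n1 \<noteq> 0 \<or> n2 \<noteq> 0 \<or> n3 \<noteq> 0" | "a1 = 0" | "n3 = 0" "a1 \<noteq> 0"
    by blast
  then show ?thesis
  proof cases
    case 1
    with cross that show ?thesis by blast
  next
    case 2
    then show ?thesis using that[of 1 0 0] by simp
  next
    case 3
    have "Im (a2 / a1) = Im (cnj a1 * a2) / (cmod a1)\<^sup>2"
      using \<open>a1 \<noteq> 0\<close> by (simp add: complex_div_cnj[of a2 a1] mult.commute Im_divide_of_real)
    then have "Im (a2 / a1) = 0"
      using 3 unfolding n1_n2_n3_def by simp
    then have "of_real (Re (a2 / a1)) = a2 / a1"
      by (simp add: complex_eq_iff)
    then have "of_real (Re (a2 / a1)) * a1 = a2"
      using \<open>a1 \<noteq> 0\<close> by simp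
    then show ?thesis
      using that[of "Re (a2 / a1)" "-1" 0] by simp
  qed
qed

lemma bloch_sphere_point:
  fixes x y z :: real
  assumes sphere: "x\<^sup>2 + y\<^sup>2 + z\<^sup>2 = 1"
  obtains t where "inner2 t t = 1"
    and "t False * cnj (t False) - t True * cnj (t True) = of_real z"
    and "t False * cnj (t True) = Complex (x / 2) (y / 2)"
proof (cases "z = -1")
  case True
  then have "x = 0" "y = 0"
    using sphere by (simp_all add: add_nonneg_eq_0_iff)
  then show ?thesis
    using True that[of "\<lambda>a. if a then 1 else 0"] by (simp add: inner2_def sum_UNIV_bool Complex_eq)
next
  case False
  have "z\<^sup>2 \<le> 1"
    using sphere by (smt (verit) zero_le_power2)
  then have "\<bar>z\<bar> \<le> 1"
    by (simp add: abs_square_le_1)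
  with False have pos: "1 + z > 0"
    by linarith
  define r where "r = sqrt ((1 + z) / 2)"
  have r: "r > 0" "r\<^sup>2 = (1 + z) / 2"
    unfolding r_def using pos by simp_all
  define t where "t = (\<lambda>a. if a then Complex x (- y) / of_real (2 * r) else of_real r)"
  have "x\<^sup>2 + y\<^sup>2 = (1 - z) * (1 + z)"
    using sphere by (simp add: algebra_simps power2_eq_square)
  then have "(x\<^sup>2 + y\<^sup>2) / (4 * r\<^sup>2) = (1 - z) / 2"
    using pos unfolding r(2) by (simp add: field_simps)
  moreover have "t True * cnj (t True) = of_real ((x\<^sup>2 + y\<^sup>2) / (4 * r\<^sup>2))"
    unfolding t_def using r(1) by (simp add: complex_eq_iff power2_eq_square field_simps)
  ultimately have t1: "t True * cnj (t True) = of_real ((1 - z) / 2)"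
    by metis
  have t0: "t False * cnj (t False) = of_real ((1 + z) / 2)"
    unfolding t_def r(2)[symmetric] by (simp add: power2_eq_square)
  show ?thesis
  proof (rule that)
    have "inner2 t t = t False * cnj (t False) + t True * cnj (t True)"
      by (simp add: inner2_def sum_UNIV_bool mult.commute)
    also have "\<dots> = of_real ((1 + z) / 2 + (1 - z) / 2)"
      unfolding t0 t1 by simp
    finally show "inner2 t t = 1"
      by (simp add: field_simps)
    show "t False * cnj (t False) - t True * cnj (t True) = of_real z"
      unfolding t0 t1 by (simp add: field_simps)
    show "t False * cnj (t True) = Complex (x / 2) (y / 2)"
      unfolding t_def using r(1) by (simp add: complex_eq_iff field_simps)
  qed
qed

definition quad_form :: "op1 \<Rightarrow> (bool \<Rightarrow> complex) \<Rightarrow> complex" where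
  "quad_form M t = (\<Sum>a\<in>UNIV. \<Sum>c\<in>UNIV. t a * cnj (t c) * M a c)"

lemma traceless_quad_form_isotropic:
  assumes traceless: "M False False + M True True = 0"
  obtains t where "inner2 t t = 1" "quad_form M t = 0"
proof -
  define A B C where "A = M False False" "B = M False True" "C = M True False"
  \<comment> \<open>Bloch sphere: the projector onto t is (I + z Z + x X + y Y) / 2, so quad_form M t is
    real-linear in the unit vector (x, y, z).\<close>
  obtain z x y :: real where nz: "z \<noteq> 0 \<or> x \<noteq> 0 \<or> y \<noteq> 0"
    and dep: "of_real z * A + of_real x * ((B + C) / 2) + of_real y * (\<i> * (B - C) / 2) = 0"
    by (rule complex_real_dependent3)
  define n where "n = sqrt (z\<^sup>2 + x\<^sup>2 + y\<^sup>2)"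
  have pos: "z\<^sup>2 + x\<^sup>2 + y\<^sup>2 > 0"
    using nz by (smt (verit) not_sum_power2_lt_zero power2_less_eq_zero_iff zero_le_power2)
  then have n: "n > 0" "n\<^sup>2 = z\<^sup>2 + x\<^sup>2 + y\<^sup>2"
    unfolding n_def by simp_all
  have "(x / n)\<^sup>2 + (y / n)\<^sup>2 + (z / n)\<^sup>2 = (z\<^sup>2 + x\<^sup>2 + y\<^sup>2) / n\<^sup>2"
    by (simp add: power_divide add_divide_distrib)
  then have "(x / n)\<^sup>2 + (y / n)\<^sup>2 + (z / n)\<^sup>2 = 1"
    using n(2) pos by simp
  then obtain t where t: "inner2 t t = 1"
    "t False * cnj (t False) - t True * cnj (t True) = of_real (z / n)"
    "t False * cnj (t True) = Complex (x / n / 2) (y / n / 2)"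
    by (rule bloch_sphere_point)
  have "quad_form M t = (t False * cnj (t False) - t True * cnj (t True)) * A
      + t False * cnj (t True) * B + cnj (t False * cnj (t True)) * C"
    using traceless unfolding quad_form_def A_B_C_def
    by (simp add: sum_UNIV_bool algebra_simps eq_neg_iff_add_eq_0[symmetric])
  also have "\<dots> = (of_real z * A + of_real x * ((B + C) / 2) + of_real y * (\<i> * (B - C) / 2)) / of_real n"
    unfolding t using n(1) by (simp add: Complex_eq field_simps)
  finally have "quad_form M t = 0"
    unfolding dep by simp
  with t(1) show ?thesis
    by (rule that)
qed

definition perp :: "(bool \<Rightarrow> complex) \<Rightarrow> bool \<Rightarrow> complex" where
  "perp t = (\<lambda>a. if a then cnj (t False) else - cnj (t True))"

lemma quad_form_perp:
  "M False False + M True True = 0 \<Longrightarrow> quad_form M (perp t) = - quad_form M t"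
  unfolding quad_form_def perp_def
  by (simp add: sum_UNIV_bool algebra_simps eq_neg_iff_add_eq_0[symmetric])

lemma kraus_complete_perp:
  assumes "inner2 t t = 1"
  shows "kraus_complete [outer t t, outer (perp t) (perp t)]"
  unfolding kraus_complete_def
proof (intro allI)
  fix a c
  have unit: "cnj (t False) * t False + cnj (t True) * t True = 1"
    using assms by (simp add: inner2_def sum_UNIV_bool)
  have "(\<Sum>K\<leftarrow>[outer t t, outer (perp t) (perp t)]. \<Sum>b\<in>UNIV. cnj (K b a) * K b c)
      = (t c * cnj (t a) + perp t c * cnj (perp t a)) * (cnj (t False) * t False + cnj (t True) * t True)"
    by (simp add: outer_def perp_def sum_UNIV_bool algebra_simps)
  also have "\<dots> = (if a = c then 1 else 0)"
    using unit unfolding perp_def by (cases a; cases c) (simp_all add: algebra_simps)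
  finally show "(\<Sum>K\<leftarrow>[outer t t, outer (perp t) (perp t)]. \<Sum>b\<in>UNIV. cnj (K b a) * K b c)
      = (if a = c then 1 else 0)" .
qed

section \<open>Subsystem states under local operators\<close>

fun apply_ops :: "(nat set \<times> (cfg \<Rightarrow> cfg \<Rightarrow> complex)) list \<Rightarrow> qstate \<Rightarrow> qstate" where
  "apply_ops [] \<phi> = \<phi>"
| "apply_ops ((J, A) # ops) \<phi> = apply_on J A (apply_ops ops \<phi>)"

definition ops_within :: "nat set \<Rightarrow> (nat set \<times> (cfg \<Rightarrow> cfg \<Rightarrow> complex)) list \<Rightarrow> bool" where
  "ops_within B ops \<longleftrightarrow> (\<forall>(J, A)\<in>set ops. J \<subseteq> B)"

lemma apply_ops_append: "apply_ops (ops1 @ ops2) \<phi> = apply_ops ops1 (apply_ops ops2 \<phi>)"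
  by (induction ops1) auto

lemma apply_ops_add:
  "apply_ops ops (\<lambda>x. \<phi> x + \<psi> x) = (\<lambda>x. apply_ops ops \<phi> x + apply_ops ops \<psi> x)"
  by (induction ops) (auto simp: apply_on_add)

lemma ops_within_mono: "ops_within A ops \<Longrightarrow> A \<subseteq> B \<Longrightarrow> ops_within B ops"
  unfolding ops_within_def by fastforce

lemma in_state_apply_on:
  assumes "in_state S \<chi> \<phi>" "J \<inter> S = {}"
  shows "in_state S \<chi> (apply_on J A \<phi>)"
proof -
  obtain r where r: "\<And>x. \<phi> x = \<chi> (\<lambda>j. j \<in> S \<and> x j) * r (\<lambda>j. j \<notin> S \<and> x j)"
    using assms(1) unfolding in_state_def by blast
  define r' where "r' y = (\<Sum>z\<in>cfgs J. A (\<lambda>j. j \<in> J \<and> y j) z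
      * r (\<lambda>j. j \<notin> S \<and> (if j \<in> J then z j else y j)))" for y
  have "apply_on J A \<phi> x = \<chi> (\<lambda>j. j \<in> S \<and> x j) * r' (\<lambda>j. j \<notin> S \<and> x j)" for x
  proof -
    have "(\<lambda>j. j \<in> S \<and> (if j \<in> J then z j else x j)) = (\<lambda>j. j \<in> S \<and> x j)" for z
      using assms(2) by (auto simp: fun_eq_iff)
    moreover have "(\<lambda>j. j \<in> J \<and> j \<notin> S \<and> x j) = (\<lambda>j. j \<in> J \<and> x j)"
      using assms(2) by (auto simp: fun_eq_iff)
    moreover have "(\<lambda>j. j \<notin> S \<and> (if j \<in> J then z j else j \<notin> S \<and> x j))
        = (\<lambda>j. j \<notin> S \<and> (if j \<in> J then z j else x j))" for z
      by (auto simp: fun_eq_iff)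
    ultimately show ?thesis
      unfolding apply_on_def r r'_def by (simp add: sum_distrib_left mult.left_commute)
  qed
  then show ?thesis
    unfolding in_state_def by blast
qed

lemma in_state_apply_ops:
  "in_state S \<chi> \<phi> \<Longrightarrow> ops_within B ops \<Longrightarrow> B \<inter> S = {} \<Longrightarrow> in_state S \<chi> (apply_ops ops \<phi>)"
  unfolding ops_within_def by (induction ops) (auto intro!: in_state_apply_on, blast)

lemma in_state_apply_on_rank_one: "in_state B f (apply_on B (\<lambda>x z. f x * g z) \<phi>)"
proof -
  define r where "r y = (\<Sum>z\<in>cfgs B. g z * \<phi> (\<lambda>j. if j \<in> B then z j else y j))" for y
  have "(\<lambda>j. if j \<in> B then z j else j \<notin> B \<and> x j) = (\<lambda>j. if j \<in> B then z j else x j)" for x z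
    by (auto simp: fun_eq_iff)
  then have "apply_on B (\<lambda>x z. f x * g z) \<phi> x = f (\<lambda>j. j \<in> B \<and> x j) * r (\<lambda>j. j \<notin> B \<and> x j)" for x
    unfolding apply_on_def r_def by (simp add: sum_distrib_left mult.assoc)
  then show ?thesis
    unfolding in_state_def by blast
qed

definition partial_inner :: "nat \<Rightarrow> (bool \<Rightarrow> complex) \<Rightarrow> qstate \<Rightarrow> qstate" where
  "partial_inner q t v = (\<lambda>y. \<Sum>a\<in>UNIV. cnj (t a) * v (y(q := a)))"

lemma in_state_apply1_outer:
  assumes "q \<notin> B" "in_state (insert q B) v \<phi>"
  shows "in_state B (partial_inner q t v) (apply1 q (outer t t) \<phi>)"
proof -
  obtain r where r: "\<And>x. \<phi> x = v (\<lambda>j. j \<in> insert q B \<and> x j) * r (\<lambda>j. j \<notin> insert q B \<and> x j)"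
    using assms(2) unfolding in_state_def by blast
  define r' where "r' w = t (w q) * r (\<lambda>j. j \<notin> insert q B \<and> w j)" for w
  have "apply1 q (outer t t) \<phi> x = partial_inner q t v (\<lambda>j. j \<in> B \<and> x j) * r' (\<lambda>j. j \<notin> B \<and> x j)" for x
  proof -
    have "(\<lambda>j. j \<in> insert q B \<and> (x(q := a)) j) = (\<lambda>j. j \<in> B \<and> x j)(q := a)" for a
      using assms(1) by (auto simp: fun_eq_iff)
    moreover have "(\<lambda>j. j \<notin> insert q B \<and> (x(q := a)) j) = (\<lambda>j. j \<notin> insert q B \<and> x j)" for a
      by (auto simp: fun_eq_iff)
    moreover have "(\<lambda>j. j \<notin> insert q B \<and> j \<notin> B \<and> x j) = (\<lambda>j. j \<notin> insert q B \<and> x j)"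
      by (auto simp: fun_eq_iff)
    ultimately show ?thesis
      unfolding apply1_eq_sum r r'_def partial_inner_def outer_def
      using assms(1) by (simp add: sum_UNIV_bool algebra_simps)
  qed
  then show ?thesis
    unfolding in_state_def by blast
qed

section \<open>LOCC discrimination of two orthogonal states\<close>

lemma orthogonality_preserving_basis:
  assumes "q \<notin> B" "qinner (insert q B) v0 v1 = 0"
  obtains t where "inner2 t t = 1"
    and "qinner B (partial_inner q t v0) (partial_inner q t v1) = 0"
    and "qinner B (partial_inner q (perp t) v0) (partial_inner q (perp t) v1) = 0"
proof -
  define G where "G a c = (\<Sum>y\<in>cfgs B. cnj (v0 (y(q := a))) * v1 (y(q := c)))" for a c
  have qinner_G: "qinner B (partial_inner q s v0) (partial_inner q s v1) = quad_form G s" for s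
    unfolding qinner_def partial_inner_def quad_form_def G_def
    by (simp add: sum_UNIV_bool algebra_simps sum.distrib sum_distrib_left)
  have traceless: "G False False + G True True = 0"
    using assms unfolding qinner_def G_def by (simp add: sum_cfgs_insert sum_UNIV_bool sum.distrib)
  then obtain t where "inner2 t t = 1" "quad_form G t = 0"
    by (rule traceless_quad_form_isotropic)
  with traceless show ?thesis
    using that[of t] quad_form_perp[of G t] by (auto simp: qinner_G)
qed

definition locc_distinguishes :: "nat set \<Rightarrow> (bool \<Rightarrow> qstate) \<Rightarrow> locc \<Rightarrow> (bool \<Rightarrow> locc) \<Rightarrow> bool" where
  "locc_distinguishes B v P Pc \<longleftrightarrow> (\<forall>\<phi> \<chi>. (\<forall>b. in_state B (v b) (\<phi> b)) \<longrightarrow>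
     \<chi> \<in> lleaves P (\<lambda>x. \<phi> False x + \<phi> True x) \<longrightarrow>
     (\<exists>b ops. ops_within B ops \<and> \<chi> \<in> lleaves (Pc b) (apply_ops ops (\<phi> b))))"

lemma locc_distinguishes_empty:
  assumes "qinner {} (v False) (v True) = 0"
  obtains b where "locc_distinguishes {} v (Pc b) Pc"
proof -
  have "v False (\<lambda>_. False) = 0 \<or> v True (\<lambda>_. False) = 0"
    using assms unfolding qinner_def cfgs_empty by simp
  then obtain b where b: "v (\<not> b) (\<lambda>_. False) = 0"
    by (metis (full_types))
  have "locc_distinguishes {} v (Pc b) Pc"
    unfolding locc_distinguishes_def
  proof (intro allI impI)
    fix \<phi> \<chi> assume states: "\<forall>b. in_state {} (v b) (\<phi> b)"
      and "\<chi> \<in> lleaves (Pc b) (\<lambda>x. \<phi> False x + \<phi> True x)"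
    moreover have "\<phi> (\<not> b) = (\<lambda>_. 0)"
      using b states[rule_format, of "\<not> b"] unfolding in_state_def by auto
    ultimately have "\<chi> \<in> lleaves (Pc b) (apply_ops [] (\<phi> b))"
      by (cases b) auto
    moreover have "ops_within {} []"
      by (simp add: ops_within_def)
    ultimately show "\<exists>b ops. ops_within {} ops \<and> \<chi> \<in> lleaves (Pc b) (apply_ops ops (\<phi> b))"
      by blast
  qed
  then show ?thesis
    by (rule that)
qed

lemma locc_distinguishes_insert:
  assumes "q \<notin> B" "q \<in> Q" "qinner (insert q B) (v False) (v True) = 0"
    and IH: "\<And>v'. qinner B (v' False) (v' True) = 0 \<Longrightarrow> \<exists>P. valid_locc Q P \<and> locc_distinguishes B v' P Pc"
  shows "\<exists>P. valid_locc Q P \<and> locc_distinguishes (insert q B) v P Pc"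
proof -
  obtain t where t: "inner2 t t = 1" and orth:
    "qinner B (partial_inner q t (v False)) (partial_inner q t (v True)) = 0"
    "qinner B (partial_inner q (perp t) (v False)) (partial_inner q (perp t) (v True)) = 0"
    by (rule orthogonality_preserving_basis[OF assms(1,3)])
  define s where "s i = (if i = 0 then t else perp t)" for i :: nat
  define Ks where "Ks = [outer t t, outer (perp t) (perp t)]"
  have Ks: "Ks ! i = outer (s i) (s i)" if "i < length Ks" for i
    using that unfolding Ks_def s_def by (cases i) auto
  have "\<forall>i. \<exists>P. valid_locc Q P \<and> locc_distinguishes B (\<lambda>b. partial_inner q (s i) (v b)) P Pc"
    using IH orth unfolding s_def by simp
  then obtain Pi where Pi: "\<And>i. valid_locc Q (Pi i)"
    "\<And>i. locc_distinguishes B (\<lambda>b. partial_inner q (s i) (v b)) (Pi i) Pc"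
    by metis
  have "valid_locc Q (Act q Ks Pi)"
    using Pi(1) assms(2) kraus_complete_perp[OF t] unfolding valid_locc_def Ks_def by simp
  moreover have "locc_distinguishes (insert q B) v (Act q Ks Pi) Pc"
    unfolding locc_distinguishes_def
  proof (intro allI impI)
    fix \<phi> \<chi> assume states: "\<forall>b. in_state (insert q B) (v b) (\<phi> b)"
      and "\<chi> \<in> lleaves (Act q Ks Pi) (\<lambda>x. \<phi> False x + \<phi> True x)"
    then obtain i where "i < length Ks" and "\<chi> \<in> lleaves (Pi i) (apply1 q (Ks ! i) (\<lambda>x. \<phi> False x + \<phi> True x))"
      by auto
    then have "\<chi> \<in> lleaves (Pi i) (\<lambda>x. apply1 q (outer (s i) (s i)) (\<phi> False) x + apply1 q (outer (s i) (s i)) (\<phi> True) x)"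
      by (simp add: Ks apply1_add)
    moreover have "in_state B (partial_inner q (s i) (v b)) (apply1 q (outer (s i) (s i)) (\<phi> b))" for b
      using in_state_apply1_outer[OF assms(1)] states by blast
    ultimately obtain b ops where "ops_within B ops"
      and "\<chi> \<in> lleaves (Pc b) (apply_ops ops (apply1 q (outer (s i) (s i)) (\<phi> b)))"
      using Pi(2)[of i, unfolded locc_distinguishes_def, rule_format,
          of "\<lambda>b. apply1 q (outer (s i) (s i)) (\<phi> b)"] by blast
    then show "\<exists>b ops. ops_within (insert q B) ops \<and> \<chi> \<in> lleaves (Pc b) (apply_ops ops (\<phi> b))"
      by (intro exI[of _ b] exI[of _ "ops @ [({q}, \<lambda>x z. outer (s i) (s i) (x q) (z q))]"])
        (auto simp: apply_ops_append apply1_def ops_within_def)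
  qed
  ultimately show ?thesis
    by blast
qed

lemma locc_distinguish_orthogonal:
  assumes "finite B" "B \<subseteq> Q" "qinner B (v False) (v True) = 0" "\<And>b. valid_locc Q (Pc b)"
  shows "\<exists>P. valid_locc Q P \<and> locc_distinguishes B v P Pc"
  using assms
proof (induction B arbitrary: v rule: finite_induct)
  case empty
  then obtain b where "locc_distinguishes {} v (Pc b) Pc"
    using locc_distinguishes_empty by blast
  with empty.prems(3) show ?case
    by blast
next
  case (insert q B)
  then show ?case
    using locc_distinguishes_insert[of q B Q v Pc] by simp
qed

section \<open>Encoded states\<close>

lemma blockset_iff: "x \<in> blockset m k \<longleftrightarrow> 0 < m \<and> x div m = k"
proof
  assume "x \<in> blockset m k"
  then show "0 < m \<and> x div m = k"
    unfolding blockset_def by (auto intro!: div_nat_eqI simp: algebra_simps)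
next
  assume "0 < m \<and> x div m = k"
  then show "x \<in> blockset m k"
    unfolding blockset_def using div_times_less_eq_dividend[of x m] dividend_less_div_times[of m x]
    by (auto simp: algebra_simps)
qed

lemma blockset_disjoint: "j \<noteq> k \<Longrightarrow> blockset m j \<inter> blockset m k = {}"
  by (auto simp: blockset_iff)

lemma blockset_subset: "k < N \<Longrightarrow> blockset m k \<subseteq> {..<N * m}"
  by (auto simp: blockset_iff div_less_iff_less_mult)

lemma block_cong: "(\<And>i. i \<in> blockset m k \<Longrightarrow> y i = y' i) \<Longrightarrow> block m k y = block m k y'"
  unfolding block_def blockset_def by (auto simp: fun_eq_iff)

lemma bij_betw_block: "bij_betw (block m k) (cfgs (blockset m k)) (cfgs {..<m})"
  by (rule bij_betw_byWitness[where f' = "\<lambda>w i. i \<in> blockset m k \<and> w (i - k * m)"])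
    (auto simp: block_def blockset_def cfgs_def fun_eq_iff)

lemma sum_cfgs_blockset: "(\<Sum>z\<in>cfgs (blockset m k). F (block m k z)) = (\<Sum>w\<in>cfgs {..<m}. F w)"
  using sum.reindex_bij_betw[OF bij_betw_block, of F] by simp

lemma is_encoding_orthonormal:
  assumes "is_encoding m e"
  shows "(\<Sum>w\<in>cfgs {..<m}. cnj (e b w) * e c w) = (if b = c then 1 else 0)"
proof -
  have "qinner {..<m} (e True) (e False) = cnj (qinner {..<m} (e False) (e True))"
    unfolding qinner_def by (simp add: mult.commute)
  with assms show ?thesis
    unfolding is_encoding_def normalized_state_def qinner_def by (cases b; cases c) auto
qed

lemma logical_op_contract:
  assumes "is_encoding m e"
  shows "(\<Sum>z\<in>cfgs (blockset m k). logical_op e m k X y z * e c (block m k z))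
       = (\<Sum>a\<in>UNIV. X a c * e a (block m k y))"
proof -
  have "(\<Sum>z\<in>cfgs (blockset m k). logical_op e m k X y z * e c (block m k z))
      = (\<Sum>a\<in>UNIV. \<Sum>b\<in>UNIV. X a b * e a (block m k y) * (\<Sum>w\<in>cfgs {..<m}. cnj (e b w) * e c w))"
    unfolding logical_op_def sum_cfgs_blockset[of "\<lambda>w. (\<Sum>a\<in>UNIV. \<Sum>b\<in>UNIV. X a b * e a (block m k y) * cnj (e b w)) * e c w"]
    by (simp add: sum_UNIV_bool sum.distrib sum_distrib_left algebra_simps)
  then show ?thesis
    by (simp add: is_encoding_orthonormal[OF assms] sum_UNIV_bool)
qed

definition codeword :: "(bool \<Rightarrow> qstate) \<Rightarrow> nat \<Rightarrow> nat set \<Rightarrow> cfg \<Rightarrow> qstate" where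
  "codeword e m K i y = (\<Prod>k\<in>K. e (i k) (block m k y))"

lemma logical_op_codeword:
  assumes enc: "is_encoding m e" and K: "finite K" "k \<in> K"
  shows "(\<Sum>z\<in>cfgs (blockset m k). logical_op e m k X y z
            * codeword e m K i (\<lambda>l. if l \<in> blockset m k then z l else y l))
       = (\<Sum>a\<in>UNIV. X a (i k) * codeword e m K (i(k := a)) y)"
proof -
  define ov where "ov z = (\<lambda>l. if l \<in> blockset m k then z l else y l)" for z
  define G where "G = (\<Prod>k'\<in>K - {k}. e (i k') (block m k' y))"
  have "block m k' (ov z) = block m k' y" if "k' \<noteq> k" for k' z
    using blockset_disjoint[OF that, of m] unfolding ov_def by (intro block_cong) auto
  then have codeword_ov: "codeword e m K i (ov z) = e (i k) (block m k (ov z)) * G" for z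
    unfolding codeword_def G_def prod.remove[OF K] by (intro arg_cong2[where f = "(*)"] prod.cong) auto
  have ov_k: "block m k (ov z) = block m k z" for z
    unfolding ov_def by (rule block_cong) simp
  have upd: "codeword e m K (i(k := a)) y = e a (block m k y) * G" for a
    unfolding codeword_def G_def prod.remove[OF K] by (intro arg_cong2[where f = "(*)"] prod.cong) auto
  show ?thesis
    unfolding ov_def[symmetric] codeword_ov ov_k upd
    by (simp add: sum_distrib_right[symmetric] mult.assoc[symmetric] logical_op_contract[OF enc])
qed

lemma encode_apply1:
  assumes enc: "is_encoding m e" and "j < N"
  shows "encode e m N (apply1 j X \<psi>) = apply_on (blockset m j) (logical_op e m j X) (encode e m N \<psi>)"
proof
  fix y
  let ?L = "logical_op e m j X"
  let ?cw = "codeword e m {..<N}"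
  show "encode e m N (apply1 j X \<psi>) y = apply_on (blockset m j) ?L (encode e m N \<psi>) y"
  proof (cases "y \<in> cfgs {..<N * m}")
    case False
    have "is_state {..<N * m} (apply_on (blockset m j) ?L (encode e m N \<psi>))"
      using blockset_subset[OF \<open>j < N\<close>] by (intro is_state_apply_on) (auto simp: is_state_def encode_def)
    with False show ?thesis
      unfolding is_state_def encode_def by simp
  next
    case True
    have ov: "(\<lambda>l. if l \<in> blockset m j then z l else y l) \<in> cfgs {..<N * m}" if "z \<in> cfgs (blockset m j)" for z
      using that True blockset_subset[OF \<open>j < N\<close>] unfolding cfgs_def by auto
    have "block m j (\<lambda>l. l \<in> blockset m j \<and> y l) = block m j y"
      by (rule block_cong) simp
    then have L: "?L (\<lambda>l. l \<in> blockset m j \<and> y l) = ?L y"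
      unfolding logical_op_def by simp
    have "apply_on (blockset m j) ?L (encode e m N \<psi>) y
        = (\<Sum>z\<in>cfgs (blockset m j). ?L y z
            * (\<Sum>i\<in>cfgs {..<N}. \<psi> i * ?cw i (\<lambda>l. if l \<in> blockset m j then z l else y l)))"
      unfolding apply_on_def L encode_def codeword_def by (rule sum.cong) (simp_all add: ov)
    also have "\<dots> = (\<Sum>i\<in>cfgs {..<N}. \<psi> i
        * (\<Sum>z\<in>cfgs (blockset m j). ?L y z * ?cw i (\<lambda>l. if l \<in> blockset m j then z l else y l)))"
      unfolding sum_distrib_left by (subst sum.swap) (simp add: algebra_simps)
    also have "\<dots> = (\<Sum>i\<in>cfgs {..<N}. \<psi> i * (\<Sum>a\<in>UNIV. X a (i j) * ?cw (i(j := a)) y))"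
      using \<open>j < N\<close> by (simp add: logical_op_codeword[OF enc])
    also have "\<dots> = (\<Sum>i\<in>cfgs {..<N}. apply1 j X \<psi> i * ?cw i y)"
      using \<open>j < N\<close> by (simp add: sum_cfgs_apply1_transpose)
    finally show ?thesis
      using True unfolding encode_def codeword_def by simp
  qed
qed

lemma encode_add:
  "encode e m N (\<lambda>x. \<psi>1 x + \<psi>2 x) = (\<lambda>y. encode e m N \<psi>1 y + encode e m N \<psi>2 y)"
  unfolding encode_def by (auto simp: sum.distrib algebra_simps)

lemma encode_scale: "encode e m N (\<lambda>x. c * \<psi> x) = (\<lambda>y. c * encode e m N \<psi> y)"
  unfolding encode_def by (auto simp: sum_distrib_left algebra_simps)

lemma apply_logicals_encode:
  assumes "is_encoding m e" "k \<le> n"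
  shows "apply_logicals e m k U (encode e m n \<phi>) = encode e m n (apply_locals k U \<phi>)"
  using assms(2) by (induction k) (simp_all add: encode_apply1[OF assms(1)])

definition logical_ket :: "(bool \<Rightarrow> qstate) \<Rightarrow> nat \<Rightarrow> nat \<Rightarrow> (bool \<Rightarrow> complex) \<Rightarrow> qstate" where
  "logical_ket e m k u = (\<lambda>x. \<Sum>a\<in>UNIV. u a * e a (block m k x))"

lemma qinner_logical_ket:
  assumes "is_encoding m e"
  shows "qinner (blockset m k) (logical_ket e m k u) (logical_ket e m k v) = inner2 u v"
proof -
  have "qinner (blockset m k) (logical_ket e m k u) (logical_ket e m k v)
      = (\<Sum>a\<in>UNIV. \<Sum>c\<in>UNIV. cnj (u a) * v c * (\<Sum>w\<in>cfgs {..<m}. cnj (e a w) * e c w))"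
    unfolding qinner_def logical_ket_def sum_cfgs_blockset[of "\<lambda>w. cnj (\<Sum>a\<in>UNIV. u a * e a w) * (\<Sum>a\<in>UNIV. v a * e a w)"]
    by (simp add: sum_UNIV_bool sum.distrib sum_distrib_left algebra_simps)
  then show ?thesis
    by (simp add: is_encoding_orthonormal[OF assms] sum_UNIV_bool inner2_def)
qed

lemma in_state_encode_apply1_outer:
  assumes "is_encoding m e" "k < N"
  shows "in_state (blockset m k) (logical_ket e m k u) (encode e m N (apply1 k (outer u u) \<psi>))"
proof -
  have "logical_op e m k (outer u u) = (\<lambda>x z. logical_ket e m k u x * cnj (logical_ket e m k u z))"
    unfolding logical_op_def logical_ket_def outer_def by (auto simp: fun_eq_iff sum_UNIV_bool algebra_simps)
  then show ?thesis
    unfolding encode_apply1[OF assms] by (simp add: in_state_apply_on_rank_one)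
qed

lemma codeword_union:
  assumes "S \<inter> R = {}" "finite S" "finite R" "a \<in> cfgs S" "b \<in> cfgs R"
  shows "codeword e m (S \<union> R) (\<lambda>k. a k \<or> b k) y = codeword e m S a y * codeword e m R b y"
proof -
  have "a k \<or> b k \<longleftrightarrow> (if k \<in> S then a k else b k)" for k
    using assms unfolding cfgs_def by auto
  then show ?thesis
    unfolding codeword_def prod.union_disjoint[OF assms(2,3,1)]
    using assms(1) by (auto intro!: arg_cong2[where f = "(*)"] prod.cong)
qed

lemma blockmap_block: "l < m \<Longrightarrow> blockmap m pos (k * m + l) = pos k * m + l"
  unfolding blockmap_def by simp

lemma blockset_subset_blockmap_image:
  assumes "k < n"
  shows "blockset m (pos k) \<subseteq> blockmap m pos ` {..<n * m}"
proof
  fix x assume "x \<in> blockset m (pos k)"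
  then have m: "0 < m" and x: "x div m = pos k"
    by (auto simp: blockset_iff)
  have "k * m + x mod m < Suc k * m"
    using m by simp
  also have "\<dots> \<le> n * m"
    using assms by (intro mult_le_mono1) simp
  finally have "k * m + x mod m < n * m" .
  moreover have "blockmap m pos (k * m + x mod m) = x"
    using m x div_mult_mod_eq[of x m] by (simp add: blockmap_block)
  ultimately show "x \<in> blockmap m pos ` {..<n * m}"
    by (intro image_eqI[of x _ "k * m + x mod m"]) auto
qed

lemma sum_relabel_codeword:
  assumes inj: "inj_on pos {..<n}"
  shows "(\<Sum>a\<in>cfgs (pos ` {..<n}). relabel pos {..<n} \<phi> a * codeword e m (pos ` {..<n}) a y)
       = relabel (blockmap m pos) {..<n * m} (encode e m n \<phi>) (\<lambda>j. j \<in> (\<Union>k\<in>pos ` {..<n}. blockset m k) \<and> y j)"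
    (is "?lhs = relabel _ _ _ ?y")
proof -
  define pull where "pull a = (\<lambda>k. k < n \<and> a (pos k))" for a :: cfg
  define g where "g i = \<phi> i * (\<Prod>k<n. e (i k) (block m (pos k) y))" for i
  have bij: "bij_betw pull (cfgs (pos ` {..<n})) (cfgs {..<n})"
    by (rule bij_betw_byWitness[where f' = "\<lambda>i j. \<exists>k<n. pos k = j \<and> i k"])
      (use inj in \<open>auto simp: pull_def cfgs_def fun_eq_iff inj_on_def\<close>)
  have "?lhs = (\<Sum>a\<in>cfgs (pos ` {..<n}). g (pull a))"
    unfolding relabel_def codeword_def g_def pull_def by (intro sum.cong) (simp_all add: prod.reindex[OF inj])
  also have "\<dots> = (\<Sum>i\<in>cfgs {..<n}. g i)"
    by (rule sum.reindex_bij_betw[OF bij])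
  also have "\<dots> = encode e m n \<phi> (\<lambda>j. j < n * m \<and> ?y (blockmap m pos j))"
  proof -
    have "block m k (\<lambda>j. j < n * m \<and> ?y (blockmap m pos j)) = block m (pos k) y" if "k < n" for k
    proof -
      have "k * m + l < n * m" "pos k * m + l \<in> blockset m (pos k)" if "l < m" for l
        using that \<open>k < n\<close> mult_le_mono1[of "Suc k" n m] by (auto simp: blockset_def)
      then show ?thesis
        using \<open>k < n\<close> by (auto simp: block_def blockmap_block fun_eq_iff) blast
    qed
    then show ?thesis
      unfolding encode_def g_def by (simp add: cfgs_def)
  qed
  also have "\<dots> = relabel (blockmap m pos) {..<n * m} (encode e m n \<phi>) ?y"
    using blockset_subset_blockmap_image[of _ n m pos] unfolding relabel_def cfgs_def by fastforce
  finally show ?thesis .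
qed

lemma encode_product:
  assumes SR: "S \<inter> R = {}" "S \<union> R = {..<N}" and y: "y \<in> cfgs {..<N * m}"
    and \<chi>: "\<And>x. \<chi> x = t (\<lambda>j. j \<in> S \<and> x j) * r (\<lambda>j. j \<notin> S \<and> x j)"
  shows "encode e m N \<chi> y = (\<Sum>a\<in>cfgs S. t a * codeword e m S a y) * (\<Sum>b\<in>cfgs R. r b * codeword e m R b y)"
proof -
  have fin: "finite S" "finite R"
    using finite_subset[of _ "{..<N}"] SR(2) by blast+
  have restrict: "(\<lambda>j. j \<in> S \<and> (a j \<or> b j)) = a" "(\<lambda>j. j \<notin> S \<and> (a j \<or> b j)) = b"
    if "a \<in> cfgs S" "b \<in> cfgs R" for a b
    using that SR(1) unfolding cfgs_def by (auto simp: fun_eq_iff)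
  have "encode e m N \<chi> y = (\<Sum>i\<in>cfgs (S \<union> R). \<chi> i * codeword e m (S \<union> R) i y)"
    using y unfolding encode_def codeword_def SR(2) by simp
  also have "\<dots> = (\<Sum>a\<in>cfgs S. \<Sum>b\<in>cfgs R. \<chi> (\<lambda>j. a j \<or> b j) * codeword e m (S \<union> R) (\<lambda>j. a j \<or> b j) y)"
    by (rule sum_cfgs_union[OF SR(1)])
  also have "\<dots> = (\<Sum>a\<in>cfgs S. \<Sum>b\<in>cfgs R. (t a * codeword e m S a y) * (r b * codeword e m R b y))"
    by (intro sum.cong refl) (simp add: \<chi> restrict codeword_union[OF SR(1) fin] algebra_simps)
  finally show ?thesis
    by (simp add: sum_product)
qed

lemma in_state_encode:
  assumes inj: "inj_on pos {..<n}" and sub: "pos ` {..<n} \<subseteq> {..<N}"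
    and st: "in_state (pos ` {..<n}) (relabel pos {..<n} \<phi>) \<chi>"
  shows "in_state (\<Union>k\<in>pos ` {..<n}. blockset m k)
           (relabel (blockmap m pos) {..<n * m} (encode e m n \<phi>)) (encode e m N \<chi>)"
proof -
  define S R BS where "S = pos ` {..<n}" "R = {..<N} - pos ` {..<n}" "BS = (\<Union>k\<in>pos ` {..<n}. blockset m k)"
  obtain r where r: "\<And>x. \<chi> x = relabel pos {..<n} \<phi> (\<lambda>j. j \<in> S \<and> x j) * r (\<lambda>j. j \<notin> S \<and> x j)"
    using st unfolding in_state_def S_R_BS_def by blast
  define r' where "r' y = (if y \<in> cfgs {..<N * m} then \<Sum>b\<in>cfgs R. r b * codeword e m R b y else 0)" for y
  have SR: "S \<inter> R = {}" "S \<union> R = {..<N}"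
    using sub unfolding S_R_BS_def by auto
  have "encode e m N \<chi> y = relabel (blockmap m pos) {..<n * m} (encode e m n \<phi>) (\<lambda>j. j \<in> BS \<and> y j)
      * r' (\<lambda>j. j \<notin> BS \<and> y j)" for y
  proof (cases "y \<in> cfgs {..<N * m}")
    case False
    moreover have "BS \<subseteq> {..<N * m}"
      using sub blockset_subset unfolding S_R_BS_def by blast
    ultimately show ?thesis
      unfolding encode_def r'_def cfgs_def by auto
  next
    case True
    have "block m k (\<lambda>j. j \<notin> BS \<and> y j) = block m k y" if "k \<in> R" for k
      using that blockset_disjoint[of k _ m] unfolding S_R_BS_def by (intro block_cong) blast
    then have "codeword e m R b (\<lambda>j. j \<notin> BS \<and> y j) = codeword e m R b y" for b
      unfolding codeword_def by simp
    moreover have "(\<lambda>j. j \<notin> BS \<and> y j) \<in> cfgs {..<N * m}"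
      using True unfolding cfgs_def by simp
    ultimately show ?thesis
      using encode_product[where t = "relabel pos {..<n} \<phi>" and r = r, OF SR True r] sum_relabel_codeword[OF inj, of \<phi> e m y]
      unfolding r'_def S_R_BS_def by simp
  qed
  then show ?thesis
    unfolding in_state_def S_R_BS_def by blast
qed

section \<open>Simulating measurement trees by LOCC\<close>

definition projected_on :: "nat set \<Rightarrow> (nat \<Rightarrow> bool \<Rightarrow> complex) \<Rightarrow> qstate \<Rightarrow> bool" where
  "projected_on M w \<psi> \<longleftrightarrow> (\<forall>j\<in>M. apply1 j (outer (w j) (w j)) \<psi> = \<psi>)"

lemma projected_on_apply1_outer:
  assumes "projected_on M w \<psi>" "inner2 u u = 1"
  shows "projected_on (insert j M) (w(j := u)) (apply1 j (outer u u) \<psi>)"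
  unfolding projected_on_def
proof
  fix i assume "i \<in> insert j M"
  then consider "i = j" | "i \<noteq> j" "i \<in> M"
    by blast
  then show "apply1 i (outer ((w(j := u)) i) ((w(j := u)) i)) (apply1 j (outer u u) \<psi>) = apply1 j (outer u u) \<psi>"
  proof cases
    case 1
    then show ?thesis
      using assms(2) by (simp add: apply1_opmul opmul_outer)
  next
    case 2
    then show ?thesis
      using assms(1) unfolding projected_on_def by (simp add: apply1_commute[OF \<open>i \<noteq> j\<close>])
  qed
qed

lemma apply1_outer_undo:
  assumes "inner2 v v = 1" "apply1 j (outer w w) \<psi> = \<psi>"
  shows "apply1 j (outer w v) (apply1 j (outer v v) \<psi>) = (\<lambda>x. inner2 v w * \<psi> x)"
proof -
  have "apply1 j (outer w v) (apply1 j (outer v v) \<psi>) = apply1 j (outer w v) (apply1 j (outer w w) \<psi>)"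
    using assms by (simp add: apply1_opmul opmul_outer)
  also have "\<dots> = (\<lambda>x. inner2 v w * apply1 j (outer w w) \<psi> x)"
    by (simp add: apply1_opmul opmul_outer apply1_op_scale)
  finally show ?thesis
    using assms(2) by simp
qed

text \<open>Invariant of the simulation: the qubits in M have already been measured and are in the states
  w j, and arbitrary operators may have been applied to their blocks.\<close>

definition locc_simulates ::
  "(bool \<Rightarrow> qstate) \<Rightarrow> nat \<Rightarrow> nat \<Rightarrow> nat set \<Rightarrow> nat set \<Rightarrow> (nat \<Rightarrow> bool \<Rightarrow> complex) \<Rightarrow> mtree \<Rightarrow> locc \<Rightarrow> bool"
where
  "locc_simulates e m N R M w T P \<longleftrightarrow> (\<forall>\<psi> ops \<chi>'. projected_on M w \<psi> \<longrightarrow>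
     ops_within (\<Union>k\<in>M. blockset m k) ops \<longrightarrow> \<chi>' \<in> lleaves P (apply_ops ops (encode e m N \<psi>)) \<longrightarrow>
     (\<exists>\<chi>\<in>mleaves T \<psi>. \<exists>ops'. ops_within (\<Union>k\<in>R. blockset m k) ops' \<and> \<chi>' = apply_ops ops' (encode e m N \<chi>)))"

lemma locc_simulates_leaf:
  assumes "M \<subseteq> R"
  shows "locc_simulates e m N R M w MLeaf Done"
  unfolding locc_simulates_def
proof (intro allI impI)
  fix \<psi> ops \<chi>' assume ops: "ops_within (\<Union>k\<in>M. blockset m k) ops"
    and "\<chi>' \<in> lleaves Done (apply_ops ops (encode e m N \<psi>))"
  moreover have "ops_within (\<Union>k\<in>R. blockset m k) ops"
    using assms by (intro ops_within_mono[OF ops]) blast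
  ultimately show "\<exists>\<chi>\<in>mleaves MLeaf \<psi>. \<exists>ops'. ops_within (\<Union>k\<in>R. blockset m k) ops'
      \<and> \<chi>' = apply_ops ops' (encode e m N \<chi>)"
    by auto
qed

lemma locc_simulates_repeated_measurement:
  assumes enc: "is_encoding m e" and "j < N" "j \<in> M" "unitary2 V" "inner2 (w j) (w j) = 1"
    and sim: "\<And>b. locc_simulates e m N R M (w(j := column V b)) (f b) (Pc b)"
  obtains b where "locc_simulates e m N R M w (Meas j V f) (Pc b)"
proof -
  \<comment> \<open>Re-measuring a qubit in state w with outcome v is undone on the encoding by the logical
    operator |w><v| up to the factor <v|w>, so the protocol may just follow an outcome with <v|w> \<noteq> 0.\<close>
  obtain b where overlap: "inner2 (column V b) (w j) \<noteq> 0"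
    using unitary2_column_overlap[OF assms(4,5)] .
  let ?v = "column V b"
  define c where "c = inner2 ?v (w j)"
  let ?X = "\<lambda>x z. (1 / c) * logical_op e m j (outer (w j) ?v) x z"
  have "locc_simulates e m N R M w (Meas j V f) (Pc b)"
    unfolding locc_simulates_def
  proof (intro allI impI)
    fix \<psi> ops \<chi>' assume inv: "projected_on M w \<psi>" and ops: "ops_within (\<Union>k\<in>M. blockset m k) ops"
      and leaf: "\<chi>' \<in> lleaves (Pc b) (apply_ops ops (encode e m N \<psi>))"
    define \<psi>' where "\<psi>' = apply1 j (outer ?v ?v) \<psi>"
    have "apply1 j (outer (w j) ?v) \<psi>' = (\<lambda>x. c * \<psi> x)"
      unfolding \<psi>'_def c_def using inv \<open>j \<in> M\<close> unitary2_column_unit[OF assms(4)]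
      by (simp add: projected_on_def apply1_outer_undo)
    then have "\<psi> = (\<lambda>x. (1 / c) * apply1 j (outer (w j) ?v) \<psi>' x)"
      using overlap unfolding c_def by (simp add: fun_eq_iff)
    then have "encode e m N \<psi> = apply_on (blockset m j) ?X (encode e m N \<psi>')"
      by (simp only: encode_scale encode_apply1[OF enc \<open>j < N\<close>] apply_on_scale)
    then have "\<chi>' \<in> lleaves (Pc b) (apply_ops (ops @ [(blockset m j, ?X)]) (encode e m N \<psi>'))"
      using leaf by (simp add: apply_ops_append)
    moreover have "ops_within (\<Union>k\<in>M. blockset m k) (ops @ [(blockset m j, ?X)])"
      using ops \<open>j \<in> M\<close> by (auto simp: ops_within_def)
    moreover have "projected_on M (w(j := ?v)) \<psi>'"
      using projected_on_apply1_outer[OF inv unitary2_column_unit[OF assms(4)], of j] \<open>j \<in> M\<close>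
      unfolding \<psi>'_def by (simp add: insert_absorb)
    ultimately obtain \<chi> ops' where "\<chi> \<in> mleaves (f b) \<psi>'"
      "ops_within (\<Union>k\<in>R. blockset m k) ops'" "\<chi>' = apply_ops ops' (encode e m N \<chi>)"
      using sim[of b] unfolding locc_simulates_def by blast
    moreover from this(1) have "\<chi> \<in> mleaves (Meas j V f) \<psi>"
      unfolding \<psi>'_def by (auto simp: proj_col_eq_outer)
    ultimately show "\<exists>\<chi>\<in>mleaves (Meas j V f) \<psi>. \<exists>ops'. ops_within (\<Union>k\<in>R. blockset m k) ops'
        \<and> \<chi>' = apply_ops ops' (encode e m N \<chi>)"
      by blast
  qed
  then show ?thesis
    by (rule that)
qed

lemma encode_measurement_branches:
  fixes \<psi> :: qstate
  assumes enc: "is_encoding m e" and "j < N" "j \<notin> M" "unitary2 V"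
    and ops: "ops_within (\<Union>k\<in>M. blockset m k) ops"
  defines "\<phi> b \<equiv> apply_ops ops (encode e m N (apply1 j (outer (column V b) (column V b)) \<psi>))"
  shows "apply_ops ops (encode e m N \<psi>) = (\<lambda>x. \<phi> False x + \<phi> True x)"
    and "in_state (blockset m j) (logical_ket e m j (column V b)) (\<phi> b)"
proof -
  show "apply_ops ops (encode e m N \<psi>) = (\<lambda>x. \<phi> False x + \<phi> True x)"
    unfolding \<phi>_def apply_ops_add[symmetric] encode_add[symmetric]
    using apply1_proj_col_sum[OF assms(4), of j \<psi>] by (simp only: proj_col_eq_outer)
  have "(\<Union>k\<in>M. blockset m k) \<inter> blockset m j = {}"
    using \<open>j \<notin> M\<close> by (auto simp: blockset_iff)
  then show "in_state (blockset m j) (logical_ket e m j (column V b)) (\<phi> b)"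
    unfolding \<phi>_def using ops by (intro in_state_apply_ops in_state_encode_apply1_outer enc \<open>j < N\<close>)
qed

lemma locc_simulates_fresh_measurement:
  assumes enc: "is_encoding m e" and "j < N" "j \<notin> M" "unitary2 V"
    and valid: "\<And>b. valid_locc {..<N * m} (Pc b)"
    and sim: "\<And>b. locc_simulates e m N R (insert j M) (w(j := column V b)) (f b) (Pc b)"
  shows "\<exists>P. valid_locc {..<N * m} P \<and> locc_simulates e m N R M w (Meas j V f) P"
proof -
  let ?v = "\<lambda>b. logical_ket e m j (column V b)"
  have "qinner (blockset m j) (?v False) (?v True) = 0"
    using assms(4) by (simp add: qinner_logical_ket[OF enc] unitary2_iff_inner2)
  then obtain P where P: "valid_locc {..<N * m} P" "locc_distinguishes (blockset m j) ?v P Pc"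
    using locc_distinguish_orthogonal[of "blockset m j" "{..<N * m}" ?v Pc] valid
      blockset_subset[OF \<open>j < N\<close>] by (auto simp: blockset_def)
  have "locc_simulates e m N R M w (Meas j V f) P"
    unfolding locc_simulates_def
  proof (intro allI impI)
    fix \<psi> ops \<chi>' assume inv: "projected_on M w \<psi>" and ops: "ops_within (\<Union>k\<in>M. blockset m k) ops"
      and leaf: "\<chi>' \<in> lleaves P (apply_ops ops (encode e m N \<psi>))"
    define \<psi>' where "\<psi>' b = apply1 j (outer (column V b) (column V b)) \<psi>" for b
    note branches = encode_measurement_branches[OF enc \<open>j < N\<close> \<open>j \<notin> M\<close> \<open>unitary2 V\<close> ops,
        where \<psi> = \<psi>, folded \<psi>'_def]
    obtain b opsW where opsW: "ops_within (blockset m j) opsW"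
      and "\<chi>' \<in> lleaves (Pc b) (apply_ops opsW (apply_ops ops (encode e m N (\<psi>' b))))"
      using P(2)[unfolded locc_distinguishes_def, rule_format, OF branches(2)] leaf
      unfolding branches(1) by blast
    then have "\<chi>' \<in> lleaves (Pc b) (apply_ops (opsW @ ops) (encode e m N (\<psi>' b)))"
      by (simp add: apply_ops_append)
    moreover have "ops_within (\<Union>k\<in>insert j M. blockset m k) (opsW @ ops)"
      using opsW ops by (auto simp: ops_within_def)
    moreover have "projected_on (insert j M) (w(j := column V b)) (\<psi>' b)"
      unfolding \<psi>'_def using inv unitary2_column_unit[OF assms(4)] by (rule projected_on_apply1_outer)
    ultimately obtain \<chi> ops' where "\<chi> \<in> mleaves (f b) (\<psi>' b)"
      "ops_within (\<Union>k\<in>R. blockset m k) ops'" "\<chi>' = apply_ops ops' (encode e m N \<chi>)"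
      using sim[of b, unfolded locc_simulates_def, rule_format, of "\<psi>' b" "opsW @ ops" \<chi>'] by blast
    moreover from this(1) have "\<chi> \<in> mleaves (Meas j V f) \<psi>"
      unfolding \<psi>'_def by (auto simp: proj_col_eq_outer)
    ultimately show "\<exists>\<chi>\<in>mleaves (Meas j V f) \<psi>. \<exists>ops'. ops_within (\<Union>k\<in>R. blockset m k) ops'
        \<and> \<chi>' = apply_ops ops' (encode e m N \<chi>)"
      by blast
  qed
  with P(1) show ?thesis
    by blast
qed

lemma locc_simulates_mtree:
  assumes enc: "is_encoding m e" and R: "R \<subseteq> {..<N}"
  shows "valid_mt_aux T R M \<Longrightarrow> M \<subseteq> R \<Longrightarrow> \<forall>j\<in>M. inner2 (w j) (w j) = 1 \<Longrightarrow>
    \<exists>P. valid_locc {..<N * m} P \<and> locc_simulates e m N R M w T P"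
proof (induction T arbitrary: M w)
  case MLeaf
  then show ?case
    by (intro exI[of _ Done]) (simp add: valid_locc_def locc_simulates_leaf)
next
  case (Meas j V f)
  then have j: "j \<in> R" "j < N" and V: "unitary2 V" and f: "\<And>b. valid_mt_aux (f b) R (insert j M)"
    using R by auto
  have units: "\<forall>i\<in>insert j M. inner2 ((w(j := column V b)) i) ((w(j := column V b)) i) = 1" for b
    using Meas.prems(3) unitary2_column_unit[OF V] by simp
  have "\<exists>P. valid_locc {..<N * m} P \<and> locc_simulates e m N R (insert j M) (w(j := column V b)) (f b) P" for b
    using Meas.IH[OF rangeI f[of b] _ units[of b]] Meas.prems(2) j(1) by (simp add: fun_upd_def)
  then obtain Pc where Pc: "\<And>b. valid_locc {..<N * m} (Pc b)"
    "\<And>b. locc_simulates e m N R (insert j M) (w(j := column V b)) (f b) (Pc b)"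
    by metis
  show ?case
  proof (cases "j \<in> M")
    case True
    then obtain b where "locc_simulates e m N R M w (Meas j V f) (Pc b)"
      using locc_simulates_repeated_measurement[OF enc j(2) True V] Pc(2) Meas.prems(3)
      by (metis insert_absorb)
    with Pc(1) show ?thesis
      by blast
  next
    case False
    show ?thesis
      by (rule locc_simulates_fresh_measurement[OF enc j(2) False V Pc])
  qed
qed

lemma locc_protocol_from_mtree:
  assumes enc: "is_encoding m e" and inj: "inj_on pos {..<n}" and sub: "pos ` {..<n} \<subseteq> {..<N}"
    and T: "valid_mt ({..<N} - pos ` {..<n}) {} T"
    and leaves: "\<forall>\<chi>\<in>mleaves T \<psi>. \<exists>U. (\<forall>k<n. unitary2 (U k))
                   \<and> in_state (pos ` {..<n}) (relabel pos {..<n} (apply_locals n U \<phi>)) \<chi>"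
  obtains P where "valid_locc {..<N * m} P"
    and "\<forall>\<chi>'\<in>lleaves P (encode e m N \<psi>). \<exists>U. (\<forall>k<n. unitary2 (U k)) \<and>
           in_state (\<Union>k\<in>pos ` {..<n}. blockset m k)
             (relabel (blockmap m pos) {..<n * m} (apply_logicals e m n U (encode e m n \<phi>))) \<chi>'"
proof -
  define R where "R = {..<N} - pos ` {..<n}"
  obtain P where P: "valid_locc {..<N * m} P" "locc_simulates e m N R {} (\<lambda>_ _. 0) T P"
    using locc_simulates_mtree[OF enc, of R N T "{}" "\<lambda>_ _. 0"] T unfolding R_def valid_mt_def by auto
  have "\<exists>U. (\<forall>k<n. unitary2 (U k)) \<and> in_state (\<Union>k\<in>pos ` {..<n}. blockset m k)
          (relabel (blockmap m pos) {..<n * m} (apply_logicals e m n U (encode e m n \<phi>))) \<chi>'"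
    if leaf: "\<chi>' \<in> lleaves P (encode e m N \<psi>)" for \<chi>'
  proof -
    have "projected_on {} (\<lambda>_ _. 0) \<psi>" "ops_within (\<Union>k\<in>{}. blockset m k) []"
      by (simp_all add: projected_on_def ops_within_def)
    then obtain \<chi> ops where "\<chi> \<in> mleaves T \<psi>" and ops: "ops_within (\<Union>k\<in>R. blockset m k) ops"
      and \<chi>': "\<chi>' = apply_ops ops (encode e m N \<chi>)"
      using P(2)[unfolded locc_simulates_def, rule_format, of \<psi> "[]" \<chi>'] leaf by auto
    then obtain U where U: "\<forall>k<n. unitary2 (U k)"
      and "in_state (pos ` {..<n}) (relabel pos {..<n} (apply_locals n U \<phi>)) \<chi>"
      using leaves by blast
    from this(2) have "in_state (\<Union>k\<in>pos ` {..<n}. blockset m k)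
        (relabel (blockmap m pos) {..<n * m} (encode e m n (apply_locals n U \<phi>))) (encode e m N \<chi>)"
      by (rule in_state_encode[OF inj sub])
    moreover have "(\<Union>k\<in>R. blockset m k) \<inter> (\<Union>k\<in>pos ` {..<n}. blockset m k) = {}"
      unfolding R_def by (auto simp: blockset_iff)
    ultimately have "in_state (\<Union>k\<in>pos ` {..<n}. blockset m k)
        (relabel (blockmap m pos) {..<n * m} (encode e m n (apply_locals n U \<phi>))) \<chi>'"
      unfolding \<chi>' using ops by (intro in_state_apply_ops)
    with U show ?thesis
      by (intro exI[of _ U]) (simp add: apply_logicals_encode[OF enc])
  qed
  with P(1) show ?thesis
    using that by blast
qed

theorem theorem16:
  fixes \<Psi> :: "(nat \<times> qstate) set" and e :: "bool \<Rightarrow> qstate" and m :: nat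
  assumes "\<forall>(N, \<psi>)\<in>\<Psi>. normalized_state {..<N} \<psi>"
    and "universal_LPM \<Psi>"
    and "is_encoding m e"
  shows "encoded_universal_LOCC e m (encoded_family e m \<Psi>)"
  unfolding encoded_universal_LOCC_def encoded_family_def
proof (intro allI impI)
  fix n \<phi> assume "normalized_state {..<n} \<phi>"
  with assms(2) obtain N \<psi> pos T where mem: "(N, \<psi>) \<in> \<Psi>"
    and LPM: "inj_on pos {..<n}" "pos ` {..<n} \<subseteq> {..<N}" "valid_mt ({..<N} - pos ` {..<n}) {} T"
      "\<forall>\<chi>\<in>mleaves T \<psi>. \<exists>U. (\<forall>k<n. unitary2 (U k))
         \<and> in_state (pos ` {..<n}) (relabel pos {..<n} (apply_locals n U \<phi>)) \<chi>"
    unfolding universal_LPM_def by fast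
  obtain P where "valid_locc {..<N * m} P"
    and "\<forall>\<chi>'\<in>lleaves P (encode e m N \<psi>). \<exists>U. (\<forall>k<n. unitary2 (U k)) \<and>
           in_state (\<Union>k\<in>pos ` {..<n}. blockset m k)
             (relabel (blockmap m pos) {..<n * m} (apply_logicals e m n U (encode e m n \<phi>))) \<chi>'"
    by (rule locc_protocol_from_mtree[OF assms(3) LPM])
  with mem LPM(1,2) show "\<exists>(N, \<psi>)\<in>(\<lambda>(N, \<psi>). (N, encode e m N \<psi>)) ` \<Psi>. \<exists>pos P.
      inj_on pos {..<n} \<and> pos ` {..<n} \<subseteq> {..<N} \<and> valid_locc {..<N * m} P \<and>
      (\<forall>\<chi>\<in>lleaves P \<psi>. \<exists>U. (\<forall>k<n. unitary2 (U k)) \<and> in_state (\<Union>k\<in>pos ` {..<n}. blockset m k)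
         (relabel (blockmap m pos) {..<n * m} (apply_logicals e m n U (encode e m n \<phi>))) \<chi>)"
    by (intro bexI[of _ "(N, encode e m N \<psi>)"]) auto
qed

end
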